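(* Let $K>0$, $\mu>0$, $h>0$, and $r=h/H\in(0,1)$. Consider the homogeneous controlled patch problem (context) and suppose that, for some $k>0$, $T(x,t)=e^{-Kk^2t}\phi(x)$ is a solution with $\phi\not\equiv 0$ odd of the form $$\phi(x)=\begin{cases}A\sin kx, & |x|<h/4,\\ \pm C+D\sin[k(x\mp\tfrac h2)]\pm E\cos[k(x\mp \tfrac h2)], & h/4\le \pm x\le 3h/4,\\ B\sin[k(x\mp h)], & 3h/4\le \pm x\le h,\end{cases}$$ with $\phi,\phi'$ continuous and $2h$-periodic. Then $$\sin\frac{kh}{2}\left[\frac{2}{kh}\sin\frac{kh}{2}+\Big(\frac{k^2h^2}{\mu}-1\Big)\cos\frac{kh}{2}\right]=0 .$$
   Context: Homogeneous controlled patch problem (governing perturbations about an equilibrium). A field $T(x,t)$, $2h$-periodic in $x$, satisfies $T_t=KT_{xx}+\frac{K\mu}{h^2}g(x,T)$, where $g$ is piecewise constant: on the right action region $h/4<x<3h/4$, $g=T_{\mathrm{int}}-\frac2h\int_{h/4}^{3h/4}T\,dx$; on the left action region $-3h/4<x<-h/4$, $g=T_{\mathrm{int}}-\frac2h\int_{-3h/4}^{-h/4}T\,dx$; and $g=0$ on the core $|x|<h/4$ and buffer $3h/4<|x|\le h$. Here $T_c=\frac2h\int_{-h/4}^{h/4}T\,dx$ is the core average and, with $r=h/H$, $$T_{\mathrm{int}}=T_c\,\frac{1-13r^2/48}{1-r^2/48}$$ (this is the action-region average of the parabolic interpolant through zero boundary values at $x=\pm H$ with core average $T_c$). Solutions are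 understood piecewise, with $T,T_x$ continuous across region boundaries. *)

theory Defs
  imports "HOL-Analysis.Analysis"
begin

definition core_avg :: "real \<Rightarrow> (real \<Rightarrow> real \<Rightarrow> real) \<Rightarrow> real \<Rightarrow> real" where
  "core_avg h T t = 2 / h * integral {-h/4..h/4} (\<lambda>x. T x t)"

definition T_int :: "real \<Rightarrow> real \<Rightarrow> (real \<Rightarrow> real \<Rightarrow> real) \<Rightarrow> real \<Rightarrow> real" where
  "T_int h H T t = core_avg h T t * (1 - 13 * (h/H)^2 / 48) / (1 - (h/H)^2 / 48)"

definition patch_g :: "real \<Rightarrow> real \<Rightarrow> (real \<Rightarrow> real \<Rightarrow> real) \<Rightarrow> real \<Rightarrow> real \<Rightarrow> real" where
  "patch_g h H T x t =
     (if h/4 < x \<and> x < 3*h/4 then T_int h H T t - 2 / h * integral {h/4..3*h/4} (\<lambda>y. T y t)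
      else if -3*h/4 < x \<and> x < -h/4 then T_int h H T t - 2 / h * integral {-3*h/4..-h/4} (\<lambda>y. T y t)
      else 0)"

definition patch_region :: "real \<Rightarrow> real \<Rightarrow> bool" where
  "patch_region h x \<longleftrightarrow>
     \<bar>x\<bar> < h/4 \<or> (h/4 < x \<and> x < 3*h/4) \<or> (-3*h/4 < x \<and> x < -h/4)
     \<or> (3*h/4 < \<bar>x\<bar> \<and> \<bar>x\<bar> \<le> h)"

text \<open>T solves T_t = K T_xx + K mu/h^2 g(x,T) piecewise: T(.,t) is differentiable everywhere
  (so T, T_x continuous across region boundaries), and inside each region T_xx exists and the
  equation holds.\<close>
definition patch_solution :: "real \<Rightarrow> real \<Rightarrow> real \<Rightarrow> real \<Rightarrow> (real \<Rightarrow> real \<Rightarrow> real) \<Rightarrow> bool" where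
  "patch_solution K \<mu> h H T \<longleftrightarrow>
     (\<forall>t x. (\<lambda>y. T y t) differentiable (at x)) \<and>
     (\<forall>t. continuous_on UNIV (deriv (\<lambda>y. T y t))) \<and>
     (\<forall>t x. T (x + 2*h) t = T x t) \<and>
     (\<forall>t x. patch_region h x \<longrightarrow>
        (\<exists>Txx. (deriv (\<lambda>y. T y t) has_real_derivative Txx) (at x) \<and>
               ((\<lambda>s. T x s) has_real_derivative (K * Txx + K * \<mu> / h^2 * patch_g h H T x t)) (at t)))"

end

theory Submission imports Defs begin

text \<open>Matching the value and slope of the mode at the two interfaces \<open>h/4\<close> and \<open>3h/4\<close> forces
  \<open>D = 0\<close> and ties \<open>A\<close> and \<open>C\<close> to \<open>E\<close> (unless \<open>sin(kh/2) = 0\<close>, when the claim is trivial).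
  The core average of the odd mode vanishes, hence so does \<open>T_int\<close>, and the control in the right
  action region is minus its own average, which is \<open>C + 4E sin(kh/4)/(kh)\<close>. Evaluating the
  equation at the centre \<open>x = h/2\<close> of that region gives one more linear relation, and eliminating
  \<open>A, C\<close> leaves \<open>E\<close> times the stated factor. Finally \<open>E \<noteq> 0\<close>, since otherwise the mode vanishes
  on a full period.\<close>

lemma DERIV_agree_on_interval:
  fixes f g :: "real \<Rightarrow> real"
  assumes "(f has_real_derivative f') (at x)" "(g has_real_derivative g') (at x)"
    and "a < b" "x \<in> {a..b}" "\<forall>y\<in>{a..b}. f y = g y"
  shows "f' = g'"
proof -
  have "(g has_real_derivative f') (at x within {a..b})"
    by (rule has_field_derivative_transform_within[OF has_field_derivative_at_within[OF assms(1)],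
          of 1]) (use assms in auto)
  moreover have "(g has_real_derivative g') (at x within {a..b})"
    using assms(2) has_field_derivative_at_within by blast
  ultimately show ?thesis
    using vector_derivative_unique_within_closed_interval[of a b x g f' g'] assms(3,4)
    by (auto simp: has_real_derivative_iff_has_vector_derivative)
qed

lemma isCont_agree_at_right_endpoint:
  fixes f g :: "real \<Rightarrow> real"
  assumes "isCont f x" "isCont g x" "a < x" "\<forall>y\<in>{a<..<x}. f y = g y"
  shows "f x = g x"
proof -
  have "eventually (\<lambda>y. g y = f y) (at_left x)"
    using eventually_mono[OF eventually_at_left_real[OF \<open>a < x\<close>]] assms(4) by fastforce
  then have "(f \<longlongrightarrow> g x) (at_left x)"
    using assms(2) tendsto_cong by (force simp: isCont_def filterlim_at_split)
  moreover have "(f \<longlongrightarrow> f x) (at_left x)"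
    using assms(1) by (simp add: isCont_def filterlim_at_split)
  ultimately show ?thesis
    using tendsto_unique trivial_limit_at_left_real by blast
qed

lemma periodic_shift_int:
  fixes f :: "real \<Rightarrow> 'a"
  assumes "\<forall>x. f (x + p) = f x"
  shows "f (x + p * of_int n) = f x"
proof -
  have nat: "f (y + p * of_nat m) = f y" for y m
  proof (induction m)
    case (Suc m)
    have "f (y + p * of_nat (Suc m)) = f ((y + p * of_nat m) + p)" by (simp add: algebra_simps)
    then show ?case using assms Suc by simp
  qed simp
  show ?thesis
  proof (cases "n \<ge> 0")
    case True
    then show ?thesis using nat[of x "nat n"] by simp
  next
    case False
    then show ?thesis using nat[of "x + p * of_int n" "nat (- n)"] by simp
  qed
qed

lemma periodic_representative:
  fixes f :: "real \<Rightarrow> 'a"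
  assumes "\<forall>x. f (x + p) = f x" "p > 0"
  obtains y where "y \<in> {a..<a+p}" "f y = f x"
proof
  define n where "n = \<lfloor>(x - a) / p\<rfloor>"
  have "of_int n \<le> (x - a) / p" "(x - a) / p < of_int n + 1"
    unfolding n_def by linarith+
  then have "p * of_int n \<le> x - a" "x - a < p * of_int n + p"
    using \<open>p > 0\<close> by (simp_all add: field_simps)
  then show "x - p * of_int n \<in> {a..<a+p}" by simp
  show "f (x - p * of_int n) = f x"
    using periodic_shift_int[OF assms(1), of "x - p * of_int n" n] by simp
qed

lemma integral_odd_symmetric_eq_0:
  fixes f :: "real \<Rightarrow> real"
  assumes "\<forall>x. f (- x) = - f x"
  shows "integral {-a..a} f = 0"
proof -
  have "integral {-a..a} f = integral {-a..a} (\<lambda>x. f (- x))"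
    using Henstock_Kurzweil_Integration.integral_reflect_real[of a "-a" f] by simp
  also have "\<dots> = - integral {-a..a} f"
    using assms by (simp add: integral_neg)
  finally show ?thesis by simp
qed

lemma integral_sinusoid_centred:
  fixes k :: real
  assumes "k \<noteq> 0" "w \<ge> 0"
  shows "integral {m-w..m+w} (\<lambda>x. C + D * sin (k * (x - m)) + E * cos (k * (x - m)))
    = 2 * C * w + 2 * E * sin (k * w) / k"
proof -
  define F where "F x = C * x - D / k * cos (k * (x - m)) + E / k * sin (k * (x - m))" for x
  have "(F has_real_derivative C + D * sin (k * (x - m)) + E * cos (k * (x - m))) (at x)" for x
    unfolding F_def using assms(1) by (auto intro!: derivative_eq_intros simp: field_simps)
  then have "((\<lambda>x. C + D * sin (k * (x - m)) + E * cos (k * (x - m))) has_integral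
      F (m + w) - F (m - w)) {m-w..m+w}"
    using assms(2)
    by (intro fundamental_theorem_of_calculus)
       (auto simp: has_real_derivative_iff_has_vector_derivative has_vector_derivative_at_within)
  moreover have "F (m + w) - F (m - w) = 2 * C * w + 2 * E * sin (k * w) / k"
    unfolding F_def by (simp add: field_simps)
  ultimately show ?thesis by (simp add: integral_unique)
qed

text \<open>The value and slope conditions at \<open>h/4\<close> and \<open>3h/4\<close>, with \<open>s = sin(kh/4)\<close>, \<open>c = cos(kh/4)\<close>.\<close>

lemma interface_conditions_solve:
  fixes A B C D E s c :: real
  assumes "s \<noteq> 0" "c \<noteq> 0"
    and value_in: "A * s = C - D * s + E * c" and slope_in: "A * c = D * c + E * s"
    and value_out: "C + D * s + E * c = - B * s" and slope_out: "D * c - E * s = B * c"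
  shows "D = 0" "B = - A" "A * c = E * s" "C * c = - E * (c\<^sup>2 - s\<^sup>2)"
proof -
  have "(A + B) * c = (2 * D) * c" "(A + B) * s = (- 2 * D) * s"
    using value_in slope_in value_out slope_out by (simp_all add: algebra_simps)
  then have "A + B = 2 * D" "A + B = - 2 * D"
    using assms(1,2) by simp_all
  then show D: "D = 0" and "B = - A" by simp_all
  show A: "A * c = E * s" using slope_in D by simp
  have "C = A * s - E * c" using value_in D by simp
  then have "C * c = (A * s - E * c) * c" by simp
  also have "\<dots> = (A * c) * s - E * c\<^sup>2" by (simp add: algebra_simps power2_eq_square)
  finally have "C * c = (A * c) * s - E * c\<^sup>2" .
  then show "C * c = - E * (c\<^sup>2 - s\<^sup>2)"
    using A by (simp add: algebra_simps power2_eq_square)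
qed

lemma patch_g_right_action:
  assumes "core_avg h T t = 0" "h/4 < x" "x < 3*h/4"
  shows "patch_g h H T x t = - 2 / h * integral {h/4..3*h/4} (\<lambda>y. T y t)"
  using assms by (simp add: patch_g_def T_int_def)

lemma patch_solution_separable:
  fixes \<phi> :: "real \<Rightarrow> real"
  assumes "patch_solution K \<mu> h H (\<lambda>x t. exp (c * t) * \<phi> x)" "patch_region h x"
    and "(deriv \<phi> has_real_derivative \<phi>'') (at x)"
  shows "c * \<phi> x = K * \<phi>'' + K * \<mu> / h\<^sup>2 * patch_g h H (\<lambda>x t. exp (c * t) * \<phi> x) x 0"
proof -
  obtain Txx where "(deriv (\<lambda>y. exp (c * 0) * \<phi> y) has_real_derivative Txx) (at x)"
    and time: "((\<lambda>s. exp (c * s) * \<phi> x) has_real_derivative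
      K * Txx + K * \<mu> / h\<^sup>2 * patch_g h H (\<lambda>x t. exp (c * t) * \<phi> x) x 0) (at 0)"
    using assms(1,2) unfolding patch_solution_def by blast
  then have "Txx = \<phi>''" using assms(3) DERIV_unique by simp
  moreover have "((\<lambda>s. exp (c * s) * \<phi> x) has_real_derivative c * \<phi> x) (at 0)"
    by (auto intro!: derivative_eq_intros)
  ultimately show ?thesis using time DERIV_unique by blast
qed

locale odd_patch_mode =
  fixes K \<mu> h H k A B C D E :: real and \<phi> :: "real \<Rightarrow> real"
  assumes K: "K > 0" and mu: "\<mu> > 0" and h: "h > 0" and k: "k > 0"
    and odd: "\<forall>x. \<phi> (-x) = - \<phi> x"
    and nonzero: "\<exists>x. \<phi> x \<noteq> 0"
    and periodic: "\<forall>x. \<phi> (x + 2*h) = \<phi> x"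
    and diff: "\<forall>x. \<phi> differentiable (at x)"
    and core: "\<forall>x. \<bar>x\<bar> < h/4 \<longrightarrow> \<phi> x = A * sin (k * x)"
    and actR: "\<forall>x. h/4 \<le> x \<and> x \<le> 3*h/4 \<longrightarrow>
                 \<phi> x = C + D * sin (k * (x - h/2)) + E * cos (k * (x - h/2))"
    and bufR: "\<forall>x. 3*h/4 \<le> x \<and> x \<le> h \<longrightarrow> \<phi> x = B * sin (k * (x - h))"
    and sol: "patch_solution K \<mu> h H (\<lambda>x t. exp (- K * k^2 * t) * \<phi> x)"
begin

lemma DERIV_phi: "(\<phi> has_real_derivative deriv \<phi> x) (at x)"
  using diff DERIV_deriv_iff_real_differentiable by blast

lemma core_closed: "x \<in> {0..h/4} \<Longrightarrow> \<phi> x = A * sin (k * x)"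
proof -
  have "\<phi> (h/4) = A * sin (k * (h/4))"
    by (rule isCont_agree_at_right_endpoint[where a=0, OF DERIV_isCont[OF DERIV_phi]])
       (use h core in \<open>auto intro!: continuous_intros\<close>)
  then show "x \<in> {0..h/4} \<Longrightarrow> \<phi> x = A * sin (k * x)"
    using core by (cases "x = h/4") auto
qed

lemma value_at_h4: "A * sin (k*h/4) = C - D * sin (k*h/4) + E * cos (k*h/4)"
proof -
  have "k * (h/4 - h/2) = - (k*h/4)" by (simp add: algebra_simps)
  then show ?thesis
    using core_closed[of "h/4"] actR[rule_format, of "h/4"] h by simp
qed

lemma slope_at_h4: "A * cos (k*h/4) = D * cos (k*h/4) + E * sin (k*h/4)"
proof -
  have "A * (cos (k * (h/4)) * k) = deriv \<phi> (h/4)"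
    by (rule DERIV_agree_on_interval[where f="\<lambda>x. A * sin (k * x)" and a=0 and b="h/4",
          OF _ DERIV_phi]) (use h core_closed in \<open>auto intro!: derivative_eq_intros\<close>)
  also have "\<dots> = D * (cos (k * (h/4 - h/2)) * k) - E * (sin (k * (h/4 - h/2)) * k)"
    by (rule DERIV_agree_on_interval[where g="\<lambda>x. C + D * sin (k * (x - h/2)) + E * cos (k * (x - h/2))"
          and a="h/4" and b="3*h/4", OF DERIV_phi]) (use h actR in \<open>auto intro!: derivative_eq_intros\<close>)
  finally have "k * (A * cos (k*h/4)) = k * (D * cos (k*h/4) + E * sin (k*h/4))"
    by (simp add: algebra_simps)
  then show ?thesis using k by simp
qed

lemma value_at_3h4: "C + D * sin (k*h/4) + E * cos (k*h/4) = - B * sin (k*h/4)"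
proof -
  have "k * (3*h/4 - h/2) = k*h/4" "k * (3*h/4 - h) = - (k*h/4)" by (simp_all add: algebra_simps)
  then show ?thesis
    using actR[rule_format, of "3*h/4"] bufR[rule_format, of "3*h/4"] h by simp
qed

lemma slope_at_3h4: "D * cos (k*h/4) - E * sin (k*h/4) = B * cos (k*h/4)"
proof -
  have "D * (cos (k * (3*h/4 - h/2)) * k) - E * (sin (k * (3*h/4 - h/2)) * k) = deriv \<phi> (3*h/4)"
    by (rule DERIV_agree_on_interval[where f="\<lambda>x. C + D * sin (k * (x - h/2)) + E * cos (k * (x - h/2))"
          and a="h/4" and b="3*h/4", OF _ DERIV_phi]) (use h actR in \<open>auto intro!: derivative_eq_intros\<close>)
  also have "\<dots> = B * (cos (k * (3*h/4 - h)) * k)"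
    by (rule DERIV_agree_on_interval[where g="\<lambda>x. B * sin (k * (x - h))" and a="3*h/4" and b=h,
          OF DERIV_phi]) (use h bufR in \<open>auto intro!: derivative_eq_intros\<close>)
  finally have "k * (D * cos (k*h/4) - E * sin (k*h/4)) = k * (B * cos (k*h/4))"
    by (simp add: algebra_simps)
  then show ?thesis using k by simp
qed

lemma control_at_centre:
  "patch_g h H (\<lambda>x t. exp (- K * k^2 * t) * \<phi> x) (h/2) 0
     = - 2 / h * (C * (h/2) + 2 * E * sin (k*h/4) / k)"
proof -
  have "core_avg h (\<lambda>x t. exp (- K * k^2 * t) * \<phi> x) 0 = 0"
    using integral_odd_symmetric_eq_0[OF odd, of "h/4"] by (simp add: core_avg_def)
  moreover have "integral {h/4..3*h/4} \<phi> = C * (h/2) + 2 * E * sin (k*h/4) / k"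
  proof -
    have "integral {h/2 - h/4..h/2 + h/4} \<phi>
        = integral {h/2 - h/4..h/2 + h/4} (\<lambda>x. C + D * sin (k * (x - h/2)) + E * cos (k * (x - h/2)))"
      using actR by (intro integral_cong) auto
    then show ?thesis
      using integral_sinusoid_centred[of k "h/4" "h/2" C D E] k h by (simp add: algebra_simps)
  qed
  ultimately show ?thesis
    using h by (simp add: patch_g_right_action)
qed

lemma balance_at_centre: "k\<^sup>2 * h\<^sup>2 * C = \<mu> * (C + 4 * E * sin (k*h/4) / (k*h))"
proof -
  define \<psi> where "\<psi> y = D * (cos (k * (y - h/2)) * k) - E * (sin (k * (y - h/2)) * k)" for y
  have deriv_eq: "deriv \<phi> y = \<psi> y" if "y \<in> {h/4<..<3*h/4}" for y
  proof (rule DERIV_imp_deriv)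
    have "((\<lambda>x. C + D * sin (k * (x - h/2)) + E * cos (k * (x - h/2))) has_real_derivative \<psi> y) (at y)"
      unfolding \<psi>_def by (auto intro!: derivative_eq_intros)
    then show "(\<phi> has_real_derivative \<psi> y) (at y)"
      by (rule has_field_derivative_transform_within_open[where S="{h/4<..<3*h/4}"])
         (use that actR in auto)
  qed
  have "(\<psi> has_real_derivative - (k\<^sup>2 * E)) (at (h/2))"
    unfolding \<psi>_def by (auto intro!: derivative_eq_intros simp: power2_eq_square)
  then have "(deriv \<phi> has_real_derivative - (k\<^sup>2 * E)) (at (h/2))"
    by (rule has_field_derivative_transform_within_open[where S="{h/4<..<3*h/4}"])
       (use h deriv_eq in auto)
  moreover have "patch_region h (h/2)" using h by (simp add: patch_region_def)
  ultimately have "- K * k\<^sup>2 * \<phi> (h/2)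
      = K * (- (k\<^sup>2 * E)) + K * \<mu> / h\<^sup>2 * patch_g h H (\<lambda>x t. exp (- K * k^2 * t) * \<phi> x) (h/2) 0"
    using patch_solution_separable[OF sol] by blast
  moreover have "\<phi> (h/2) = C + E" using actR[rule_format, of "h/2"] h by simp
  ultimately have "- K * k\<^sup>2 * (C + E)
      = K * (- (k\<^sup>2 * E)) + K * \<mu> / h\<^sup>2 * (- 2 / h * (C * (h/2) + 2 * E * sin (k*h/4) / k))"
    by (simp only: control_at_centre)
  then have "K * (k\<^sup>2 * h\<^sup>2 * C) = K * (\<mu> * (C + 4 * E * sin (k*h/4) / (k*h)))"
    using h k by (simp add: field_simps power2_eq_square)
  then show ?thesis using K by simp
qed

lemma coefficients_not_all_zero: "\<not> (A = 0 \<and> B = 0 \<and> C = 0 \<and> D = 0 \<and> E = 0)"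
proof
  assume zero: "A = 0 \<and> B = 0 \<and> C = 0 \<and> D = 0 \<and> E = 0"
  have half: "\<phi> x = 0" if "x \<in> {0..h}" for x
    using that core_closed actR bufR zero
    by (cases "x \<le> h/4"; cases "x \<le> 3*h/4") auto
  have "\<phi> x = 0" for x
  proof -
    obtain y where "y \<in> {-h..<-h + 2*h}" "\<phi> y = \<phi> x"
      using periodic_representative[OF periodic] h by (metis mult_pos_pos zero_less_numeral)
    then show ?thesis using half[of y] half[of "- y"] odd by (cases "y \<ge> 0") force+
  qed
  then show False using nonzero by blast
qed

lemma dispersion_relation:
  "sin (k*h/2) * (2 / (k*h) * sin (k*h/2) + (k\<^sup>2 * h\<^sup>2 / \<mu> - 1) * cos (k*h/2)) = 0"
proof -
  define s c where "s = sin (k*h/4)" and "c = cos (k*h/4)"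
  have "k*h/2 = 2 * (k*h/4)" by simp
  then have double: "sin (k*h/2) = 2 * s * c" "cos (k*h/2) = c\<^sup>2 - s\<^sup>2"
    unfolding s_def c_def by (simp_all only: sin_double cos_double)
  show ?thesis
  proof (cases "s = 0 \<or> c = 0")
    case True
    then show ?thesis using double by auto
  next
    case False
    then have "s \<noteq> 0" "c \<noteq> 0" by auto
    note solved = interface_conditions_solve[OF this value_at_h4[folded s_def c_def]
        slope_at_h4[folded s_def c_def] value_at_3h4[folded s_def c_def] slope_at_3h4[folded s_def c_def]]
    have "E \<noteq> 0"
      using solved coefficients_not_all_zero \<open>c \<noteq> 0\<close> by auto
    have "k\<^sup>2 * h\<^sup>2 * (C * c) = \<mu> * (C * c) + \<mu> * 2 * E * (2 * s * c) / (k*h)"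
      using arg_cong[OF balance_at_centre, of "\<lambda>x. x * c"] by (simp add: s_def algebra_simps)
    then have "k\<^sup>2 * h\<^sup>2 * (- E * cos (k*h/2))
        = \<mu> * (- E * cos (k*h/2)) + \<mu> * 2 * E * sin (k*h/2) / (k*h)"
      by (simp only: solved(4) double[symmetric])
    moreover have "E * (2 / (k*h) * sin (k*h/2) + (k\<^sup>2 * h\<^sup>2 / \<mu> - 1) * cos (k*h/2))
        = (\<mu> * (- E * cos (k*h/2)) + \<mu> * 2 * E * sin (k*h/2) / (k*h)
           - k\<^sup>2 * h\<^sup>2 * (- E * cos (k*h/2))) / \<mu>"
      using mu by (simp add: field_simps)
    ultimately have "E * (2 / (k*h) * sin (k*h/2) + (k\<^sup>2 * h\<^sup>2 / \<mu> - 1) * cos (k*h/2)) = 0"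
      by simp
    then show ?thesis using \<open>E \<noteq> 0\<close> by simp
  qed
qed

end

theorem mainTheorem3:
  fixes K \<mu> h H k A B C D E :: real and \<phi> :: "real \<Rightarrow> real"
  assumes K: "K > 0" and mu: "\<mu> > 0" and h: "h > 0"
    and r0: "0 < h / H" and r1: "h / H < 1"
    and k: "k > 0"
    and odd: "\<forall>x. \<phi> (-x) = - \<phi> x"
    and nonzero: "\<exists>x. \<phi> x \<noteq> 0"
    and periodic: "\<forall>x. \<phi> (x + 2*h) = \<phi> x"
    and diff: "\<forall>x. \<phi> differentiable (at x)"
    and cont_deriv: "continuous_on UNIV (deriv \<phi>)"
    and core: "\<forall>x. \<bar>x\<bar> < h/4 \<longrightarrow> \<phi> x = A * sin (k * x)"
    and actR: "\<forall>x. h/4 \<le> x \<and> x \<le> 3*h/4 \<longrightarrow>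
                 \<phi> x = C + D * sin (k * (x - h/2)) + E * cos (k * (x - h/2))"
    and actL: "\<forall>x. h/4 \<le> -x \<and> -x \<le> 3*h/4 \<longrightarrow>
                 \<phi> x = - C + D * sin (k * (x + h/2)) - E * cos (k * (x + h/2))"
    and bufR: "\<forall>x. 3*h/4 \<le> x \<and> x \<le> h \<longrightarrow> \<phi> x = B * sin (k * (x - h))"
    and bufL: "\<forall>x. 3*h/4 \<le> -x \<and> -x \<le> h \<longrightarrow> \<phi> x = B * sin (k * (x + h))"
    and sol: "patch_solution K \<mu> h H (\<lambda>x t. exp (- K * k^2 * t) * \<phi> x)"
  shows "sin (k*h/2) * (2 / (k*h) * sin (k*h/2) + (k^2 * h^2 / \<mu> - 1) * cos (k*h/2)) = 0"
proof -
  interpret odd_patch_mode K \<mu> h H k A B C D E \<phi>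
    using K mu h k odd nonzero periodic diff core actR bufR sol by unfold_locales
  show ?thesis using dispersion_relation by simp
qed

end
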